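(* Let $n\ge 3$ and let $G$ be a unicyclic graph on $n$ vertices. (1) $\mathrm{irr}_t(G)\ge 0$, with equality if and only if $G\cong C_n$. (2) If moreover $n\ge 4$ and $G\not\cong C_n$, then $\mathrm{irr}_t(G)\ge 2n-2$. Equality holds if and only if the degree sequence of $G$ is $(3,2,\ldots,2,1)$, i.e. one vertex of degree $3$, $n-2$ vertices of degree $2$ and one vertex of degree $1$.
   Context: A unicyclic graph is a simple connected graph whose number of edges equals its number of vertices. For a graph $G=(V,E)$ and $w\in V$, $d_G(w)$ is the degree of $w$. The total irregularity is $\mathrm{irr}_t(G)=\frac12\sum_{x,y\in V}|d_G(x)-d_G(y)|$, where the sum runs over all ordered pairs of vertices. $C_n$ is the cycle on $n$ vertices. Degree sequences are listed in nonincreasing order. *)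

theory Defs
  imports Complex_Main
begin

definition simple_graph :: "'a set \<Rightarrow> 'a set set \<Rightarrow> bool" where
  "simple_graph V E \<longleftrightarrow> finite V \<and> (\<forall>e\<in>E. e \<subseteq> V \<and> card e = 2)"

definition adj :: "'a set set \<Rightarrow> 'a \<Rightarrow> 'a \<Rightarrow> bool" where
  "adj E x y \<longleftrightarrow> {x, y} \<in> E"

definition connected_graph :: "'a set \<Rightarrow> 'a set set \<Rightarrow> bool" where
  "connected_graph V E \<longleftrightarrow> V \<noteq> {} \<and> (\<forall>x\<in>V. \<forall>y\<in>V. (adj E)\<^sup>*\<^sup>* x y)"

definition unicyclic :: "'a set \<Rightarrow> 'a set set \<Rightarrow> bool" where
  "unicyclic V E \<longleftrightarrow> simple_graph V E \<and> connected_graph V E \<and> card E = card V"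

definition degree :: "'a set set \<Rightarrow> 'a \<Rightarrow> nat" where
  "degree E w = card {e \<in> E. w \<in> e}"

definition irr_t :: "'a set \<Rightarrow> 'a set set \<Rightarrow> real" where
  "irr_t V E = (1/2) * (\<Sum>x\<in>V. \<Sum>y\<in>V. \<bar>real (degree E x) - real (degree E y)\<bar>)"

definition cycle_edges :: "nat \<Rightarrow> nat set set" where
  "cycle_edges n = {{i, Suc i mod n} | i. i < n}"

definition iso_cycle :: "'a set \<Rightarrow> 'a set set \<Rightarrow> nat \<Rightarrow> bool" where
  "iso_cycle V E n \<longleftrightarrow> (\<exists>f. bij_betw f V {0..<n} \<and> (\<lambda>e. f ` e) ` E = cycle_edges n)"

end

theory Submission
  imports Defs
begin

text \<open>By the handshake lemma the degrees of a unicyclic graph on \<open>n\<close> vertices sum to \<open>2n\<close>, and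
  connectivity makes every degree positive. Hence \<open>irr\<^sub>t\<close> vanishes iff every degree is 2, and a
  connected 2-regular graph is a cycle: the non-backtracking walk along any edge first revisits
  a vertex when it returns to its start, after visiting all vertices.
  If \<open>G\<close> is not a cycle there is a vertex \<open>a\<close> of degree at least 3 and a leaf \<open>b\<close>; every other
  vertex \<open>y\<close> contributes \<open>|d a - d y| + |d y - d b| \<ge> d a - d b \<ge> 2\<close> (twice) to the sum, which
  gives \<open>irr\<^sub>t \<ge> 2n - 2\<close>, with equality exactly when \<open>d a = 3\<close> and all other degrees are 2.\<close>

section \<open>Degrees and neighbours\<close>

lemma simple_graph_finite_edges: "simple_graph V E \<Longrightarrow> finite E"
  unfolding simple_graph_def by (meson Pow_iff finite_Pow_iff finite_subset subsetI)

lemma simple_graph_edgeD: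
  assumes "simple_graph V E" "{x, y} \<in> E"
  shows "x \<in> V \<and> y \<in> V \<and> x \<noteq> y"
  using assms unfolding simple_graph_def by (cases "x = y") auto

lemma sum_degree_eq_twice_card_edges:
  assumes "simple_graph V E"
  shows "(\<Sum>v\<in>V. degree E v) = 2 * card E"
proof -
  have fin: "finite V" "finite E" and edge: "\<And>e. e \<in> E \<Longrightarrow> e \<subseteq> V \<and> card e = 2"
    using assms simple_graph_finite_edges unfolding simple_graph_def by auto
  have "(\<Sum>v\<in>V. degree E v) = (\<Sum>v\<in>V. \<Sum>e\<in>E. if v \<in> e then 1 else 0)"
    unfolding degree_def using fin by (simp add: sum.inter_filter[symmetric])
  also have "\<dots> = (\<Sum>e\<in>E. \<Sum>v\<in>V. if v \<in> e then 1 else 0)"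
    by (rule sum.swap)
  also have "\<dots> = (\<Sum>e\<in>E. card e)"
  proof (rule sum.cong[OF refl])
    fix e assume "e \<in> E"
    then have "{v \<in> V. v \<in> e} = e"
      using edge by blast
    then show "(\<Sum>v\<in>V. if v \<in> e then 1 else 0) = card e"
      using fin by (simp add: sum.inter_filter[symmetric])
  qed
  also have "\<dots> = 2 * card E"
    using edge by simp
  finally show ?thesis .
qed

lemma connected_graph_degree_ge_1:
  assumes "simple_graph V E" "connected_graph V E" "card V \<ge> 2" "v \<in> V"
  shows "degree E v \<ge> 1"
proof -
  have "V \<noteq> {v}"
  proof
    assume "V = {v}"
    then show False using assms(3) by simp
  qed
  then obtain y where y: "y \<in> V" "y \<noteq> v"
    using assms(4) by blast
  then have "(adj E)\<^sup>*\<^sup>* v y"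
    using assms(2,4) unfolding connected_graph_def by blast
  then obtain z where "adj E v z"
    using y(2) by (metis converse_rtranclpE)
  then have "{e \<in> E. v \<in> e} \<noteq> {}"
    unfolding adj_def by blast
  then show ?thesis
    using simple_graph_finite_edges[OF assms(1)] unfolding degree_def
    by (simp add: Suc_le_eq card_gt_0_iff)
qed

lemma connected_graph_closed_subset:
  assumes "connected_graph V E" "x \<in> V" "x \<in> C"
    and closed: "\<And>u v. u \<in> C \<Longrightarrow> {u, v} \<in> E \<Longrightarrow> v \<in> C"
  shows "V \<subseteq> C"
proof
  fix y assume "y \<in> V"
  then have "(adj E)\<^sup>*\<^sup>* x y"
    using assms(1,2) unfolding connected_graph_def by blast
  then show "y \<in> C"
    by induction (use assms(3) closed in \<open>auto simp: adj_def\<close>)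
qed

definition neighbours :: "'a set set \<Rightarrow> 'a \<Rightarrow> 'a set" where
  "neighbours E x = {y. {x, y} \<in> E}"

lemma card_neighbours:
  assumes "simple_graph V E"
  shows "card (neighbours E x) = degree E x"
proof -
  have "bij_betw (\<lambda>y. {x, y}) (neighbours E x) {e \<in> E. x \<in> e}"
  proof (rule bij_betw_imageI)
    show "inj_on (\<lambda>y. {x, y}) (neighbours E x)"
      by (rule inj_onI) (metis doubleton_eq_iff)
    have "e \<in> (\<lambda>y. {x, y}) ` neighbours E x" if "e \<in> E" "x \<in> e" for e
    proof -
      obtain p q where "e = {p, q}"
        using assms \<open>e \<in> E\<close> unfolding simple_graph_def by (meson card_2_iff)
      then show ?thesis
        using that unfolding neighbours_def by (auto simp: insert_commute)
    qed
    then show "(\<lambda>y. {x, y}) ` neighbours E x = {e \<in> E. x \<in> e}"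
      unfolding neighbours_def by auto
  qed
  then show ?thesis
    unfolding degree_def by (rule bij_betw_same_card)
qed

lemma degree_2_neighbours:
  assumes "simple_graph V E" "degree E x = 2"
  obtains p q where "p \<noteq> q" "neighbours E x = {p, q}"
  using card_neighbours[OF assms(1), of x] assms(2) by (metis card_2_iff)

section \<open>Cycles and connected 2-regular graphs\<close>

lemma iso_cycleI:
  assumes "bij_betw s {0..<n} V" "E = (\<lambda>i. {s i, s (Suc i mod n)}) ` {0..<n}"
  shows "iso_cycle V E n"
proof -
  define f where "f = inv_into {0..<n} s"
  have "bij_betw f V {0..<n}"
    unfolding f_def using assms(1) by (rule bij_betw_inv_into)
  moreover have "f (s i) = i" if "i < n" for i
    unfolding f_def using assms(1) that by (simp add: bij_betw_def inv_into_f_f)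
  then have "(\<lambda>e. f ` e) ` E = (\<lambda>i. {i, Suc i mod n}) ` {0..<n}"
    unfolding assms(2) image_image by (intro image_cong) auto
  moreover have "\<dots> = cycle_edges n"
    unfolding cycle_edges_def by auto
  ultimately show ?thesis
    unfolding iso_cycle_def by auto
qed

lemma finite_cycle_edges: "finite (cycle_edges n)"
proof -
  have "cycle_edges n = (\<lambda>i. {i, Suc i mod n}) ` {..<n}"
    unfolding cycle_edges_def by auto
  then show ?thesis by simp
qed

lemma card_cycle_edges_containing_le_2:
  assumes "k < n"
  shows "card {e \<in> cycle_edges n. k \<in> e} \<le> 2"
proof -
  have "{e \<in> cycle_edges n. k \<in> e} \<subseteq> {{k, Suc k mod n}, {(k + n - 1) mod n, k}}"
  proof
    fix e assume "e \<in> {e \<in> cycle_edges n. k \<in> e}"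
    then obtain i where i: "i < n" "e = {i, Suc i mod n}" "k \<in> e"
      unfolding cycle_edges_def by blast
    show "e \<in> {{k, Suc k mod n}, {(k + n - 1) mod n, k}}"
    proof (cases "k = i")
      case False
      then have "k = Suc i mod n" "(k + n - 1) mod n = i"
        using i by (auto simp: mod_Suc)
      then show ?thesis
        using i by auto
    qed (use i in simp)
  qed
  then have "card {e \<in> cycle_edges n. k \<in> e} \<le> card {{k, Suc k mod n}, {(k + n - 1) mod n, k}}"
    by (rule card_mono[rotated]) simp
  also have "\<dots> \<le> 2"
    by (simp add: card_insert_if)
  finally show ?thesis .
qed

lemma iso_cycle_degree_le_2:
  assumes "iso_cycle V E n" "simple_graph V E" "v \<in> V"
  shows "degree E v \<le> 2"
proof -
  obtain f where f: "bij_betw f V {0..<n}" "(\<lambda>e. f ` e) ` E = cycle_edges n"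
    using assms(1) unfolding iso_cycle_def by blast
  have "{e \<in> E. v \<in> e} \<subseteq> Pow V"
    using assms(2) unfolding simple_graph_def by blast
  then have "inj_on (image f) {e \<in> E. v \<in> e}"
    using inj_on_image_Pow[OF bij_betw_imp_inj_on[OF f(1)]] by (rule inj_on_subset[rotated])
  then have "degree E v = card (image f ` {e \<in> E. v \<in> e})"
    unfolding degree_def by (simp add: card_image)
  also have "\<dots> \<le> card {e \<in> cycle_edges n. f v \<in> e}"
    using f(2) finite_cycle_edges by (intro card_mono) auto
  also have "\<dots> \<le> 2"
    using card_cycle_edges_containing_le_2 bij_betwE[OF f(1)] assms(3) by simp
  finally show ?thesis .
qed

lemma first_repetition:
  fixes f :: "nat \<Rightarrow> 'b"
  assumes "finite (range f)"
  obtains i j where "i < j" "f i = f j" "inj_on f {0..<j}"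
proof -
  define P where "P j \<longleftrightarrow> (\<exists>i<j. f i = f j)" for j
  have repeat: "P (max x y)" if "x \<noteq> y" "f x = f y" for x y
  proof (cases "x < y")
    case True
    then show ?thesis
      using that unfolding P_def by (auto simp: max_def)
  next
    case False
    then have "y < x" "max x y = x"
      using that(1) by auto
    then show ?thesis
      using that(2) unfolding P_def by auto
  qed
  have "\<not> inj f"
    using assms finite_imageD by blast
  then obtain x y where "x \<noteq> y" "f x = f y"
    unfolding inj_def by blast
  then have "\<exists>j. P j"
    using repeat by blast
  define j where "j = (LEAST j. P j)"
  have "P j"
    unfolding j_def using \<open>\<exists>j. P j\<close> by (rule LeastI_ex)
  moreover have "inj_on f {0..<j}"
  proof (rule inj_onI, rule ccontr)
    fix x y assume "x \<in> {0..<j}" "y \<in> {0..<j}" "f x = f y" "x \<noteq> y"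
    then have "P (max x y)" "max x y < j"
      using repeat by auto
    then show False
      unfolding j_def by (metis not_less_Least)
  qed
  ultimately show thesis
    using that unfolding P_def by blast
qed

fun nb_walk :: "'a set set \<Rightarrow> 'a \<Rightarrow> 'a \<Rightarrow> nat \<Rightarrow> 'a" where
  "nb_walk E a b 0 = a"
| "nb_walk E a b (Suc 0) = b"
| "nb_walk E a b (Suc (Suc k)) =
     (THE z. z \<in> neighbours E (nb_walk E a b (Suc k)) \<and> z \<noteq> nb_walk E a b k)"

text \<open>In a 2-regular graph the neighbour of \<open>nb_walk E a b (Suc k)\<close> other than \<open>nb_walk E a b k\<close>
  is unique, so \<open>THE\<close> picks the next vertex of the walk.\<close>

declare nb_walk.simps(3) [simp del]

lemma nb_walk_shift:
  "nb_walk E a b (m + k) = nb_walk E (nb_walk E a b m) (nb_walk E a b (Suc m)) k"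
proof -
  have "nb_walk E a b (m + k) = nb_walk E (nb_walk E a b m) (nb_walk E a b (Suc m)) k \<and>
        nb_walk E a b (m + Suc k) = nb_walk E (nb_walk E a b m) (nb_walk E a b (Suc m)) (Suc k)"
    by (induction k) (simp_all add: nb_walk.simps(3))
  then show ?thesis ..
qed

context
  fixes V :: "'a set" and E :: "'a set set" and a b :: 'a
  assumes simple: "simple_graph V E"
    and two_regular: "\<forall>v\<in>V. degree E v = 2"
    and start: "{a, b} \<in> E"
begin

abbreviation walk :: "nat \<Rightarrow> 'a" where
  "walk \<equiv> nb_walk E a b"

lemma nb_walk_step:
  assumes "{walk k, walk (Suc k)} \<in> E"
  shows "walk (Suc (Suc k)) \<in> neighbours E (walk (Suc k)) - {walk k}"
proof -
  let ?u = "walk k" and ?x = "walk (Suc k)"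
  have "?x \<in> V"
    using simple_graph_edgeD[OF simple assms] by blast
  then obtain p q where "p \<noteq> q" "neighbours E ?x = {p, q}"
    using degree_2_neighbours[OF simple] two_regular by metis
  moreover have "?u \<in> neighbours E ?x"
    using assms unfolding neighbours_def by (simp add: insert_commute)
  ultimately have "\<exists>!z. z \<in> neighbours E ?x \<and> z \<noteq> ?u"
    by auto
  then have "walk (Suc (Suc k)) \<in> neighbours E ?x \<and> walk (Suc (Suc k)) \<noteq> ?u"
    unfolding nb_walk.simps(3) by (rule theI')
  then show ?thesis
    by blast
qed

lemma nb_walk_edge: "{walk k, walk (Suc k)} \<in> E"
proof (induction k)
  case 0
  show ?case using start by simp
next
  case (Suc k)
  then show ?case
    using nb_walk_step unfolding neighbours_def by blast
qed

lemma nb_walk_not_back: "walk (Suc (Suc k)) \<noteq> walk k"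
  using nb_walk_step[OF nb_walk_edge] by blast

lemma nb_walk_in_vertices: "walk k \<in> V"
  using simple_graph_edgeD[OF simple nb_walk_edge] by blast

lemma nb_walk_neighbours:
  "neighbours E (walk (Suc k)) = {walk k, walk (Suc (Suc k))}"
proof -
  obtain p q where "p \<noteq> q" "neighbours E (walk (Suc k)) = {p, q}"
    using degree_2_neighbours[OF simple] two_regular nb_walk_in_vertices by metis
  moreover have "walk k \<in> neighbours E (walk (Suc k))"
    using nb_walk_edge[of k] unfolding neighbours_def by (simp add: insert_commute)
  moreover have "walk (Suc (Suc k)) \<in> neighbours E (walk (Suc k))"
    using nb_walk_edge[of "Suc k"] unfolding neighbours_def by simp
  ultimately show ?thesis
    using nb_walk_not_back[of k] by auto
qed

lemma nb_walk_neq_next: "walk k \<noteq> walk (Suc k)"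
  using simple_graph_edgeD[OF simple nb_walk_edge] by blast

text \<open>Otherwise \<open>walk i\<close> would have three distinct neighbours \<open>walk (i - 1)\<close>, \<open>walk (i + 1)\<close>
  and \<open>walk (j - 1)\<close>.\<close>

lemma nb_walk_repeats_at_start:
  assumes "i < j" "walk i = walk j" "inj_on walk {0..<j}"
  shows "i = 0"
proof (rule ccontr)
  assume "i \<noteq> 0"
  then obtain i' where i': "i = Suc i'"
    using not0_implies_Suc by blast
  obtain j' where j': "j = Suc j'"
    using assms(1) by (cases j) auto
  have "walk j' \<in> neighbours E (walk i)"
    using nb_walk_edge[of j'] assms(2) j' unfolding neighbours_def by (simp add: insert_commute)
  then have "walk j' = walk i' \<or> walk j' = walk (Suc i)"
    using nb_walk_neighbours[of i'] unfolding i' by blast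
  moreover have "walk j' \<noteq> walk i'"
  proof
    assume "walk j' = walk i'"
    then have "j' = i'"
      using inj_onD[OF assms(3)] i' j' assms(1) by simp
    then show False
      using i' j' assms(1) by simp
  qed
  moreover have "walk j' \<noteq> walk (Suc i)"
  proof
    assume jSi: "walk j' = walk (Suc i)"
    consider "i = j'" | "Suc i = j'" | "Suc i < j'"
      using assms(1) j' by linarith
    then show False
    proof cases
      case 1
      then show False using nb_walk_neq_next[of i] assms(2) j' by simp
    next
      case 2
      then show False using nb_walk_not_back[of i] assms(2) j' by simp
    next
      case 3
      then show False using inj_onD[OF assms(3) jSi] j' by simp
    qed
  qed
  ultimately show False
    by blast
qed

lemma nb_walk_first_return:
  obtains j where "j \<ge> 3" "inj_on walk {0..<j}" "walk j = a"
proof -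
  have "finite (range walk)"
    using simple nb_walk_in_vertices unfolding simple_graph_def by (meson finite_subset image_subsetI)
  then obtain i j where ij: "i < j" "walk i = walk j" "inj_on walk {0..<j}"
    by (rule first_repetition)
  then have "i = 0"
    by (rule nb_walk_repeats_at_start)
  then have "j \<noteq> 1" "j \<noteq> 2"
    using nb_walk_neq_next[of 0] nb_walk_not_back[of 0] ij(2) by (auto simp: numeral_2_eq_2)
  then have "j \<ge> 3"
    using ij(1) by linarith
  then show thesis
    using that ij(2,3) \<open>i = 0\<close> by simp
qed

lemma nb_walk_period:
  assumes "j \<ge> 3" "inj_on walk {0..<j}" "walk j = a"
  shows "walk (k + j) = walk k"
proof -
  obtain j' where j': "j = Suc j'"
    using assms(1) by (cases j) auto
  have "b \<in> neighbours E (walk j)"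
    using start assms(3) unfolding neighbours_def by simp
  moreover have "walk (Suc 0) \<noteq> walk j'"
  proof
    assume "walk (Suc 0) = walk j'"
    then have "Suc 0 = j'"
      using inj_onD[OF assms(2)] j' assms(1) by simp
    then show False
      using j' assms(1) by simp
  qed
  ultimately have "walk (Suc j) = b"
    using nb_walk_neighbours[of j'] j' by auto
  then show ?thesis
    using nb_walk_shift[of E a b j k] assms(3) by (simp add: add.commute)
qed

context
  fixes j :: nat
  assumes period_pos: "0 < j"
    and period: "\<And>k. walk (k + j) = walk k"
begin

lemma nb_walk_mod: "walk (k mod j) = walk k"
proof (induction k rule: less_induct)
  case (less k)
  show ?case
  proof (cases "k < j")
    case False
    then have "walk k = walk (k - j)" and "k mod j = (k - j) mod j"
      using period[of "k - j"] by (simp_all add: le_mod_geq)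
    then show ?thesis
      using less[of "k - j"] period_pos False by simp
  qed simp
qed

lemma range_nb_walk: "range walk = walk ` {0..<j}"
proof
  show "range walk \<subseteq> walk ` {0..<j}"
  proof
    fix x assume "x \<in> range walk"
    then obtain k where "x = walk (k mod j)"
      using nb_walk_mod by auto
    moreover have "k mod j \<in> {0..<j}"
      using period_pos by simp
    ultimately show "x \<in> walk ` {0..<j}"
      by blast
  qed
qed blast

lemma neighbours_nb_walk: "neighbours E (walk k) = {walk (k + j - 1), walk (Suc k)}"
proof -
  have "Suc (k + j - 1) = k + j" "Suc (Suc (k + j - 1)) = Suc k + j"
    using period_pos by auto
  then show ?thesis
    using nb_walk_neighbours[of "k + j - 1"] period[of k] period[of "Suc k"] by simp
qed

lemma nb_walk_edge_cases:
  assumes "{walk k, y} \<in> E"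
  shows "\<exists>i. {walk k, y} = {walk i, walk (Suc i)}"
proof -
  have "y = walk (k + j - 1) \<or> y = walk (Suc k)"
    using assms neighbours_nb_walk[of k] unfolding neighbours_def by blast
  moreover have "walk (Suc (k + j - 1)) = walk k"
    using period[of k] period_pos by (simp add: Suc_diff_le)
  ultimately show ?thesis
    by (auto simp: insert_commute)
qed

lemma range_nb_walk_eq_vertices:
  assumes "connected_graph V E"
  shows "range walk = V"
proof
  show "range walk \<subseteq> V"
    using nb_walk_in_vertices by blast
  show "V \<subseteq> range walk"
  proof (rule connected_graph_closed_subset[OF assms])
    show "walk 0 \<in> V" "walk 0 \<in> range walk"
      by (rule nb_walk_in_vertices, rule rangeI)
    show "v \<in> range walk" if u: "u \<in> range walk" and uv: "{u, v} \<in> E" for u v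
    proof -
      obtain k where "u = walk k"
        using u by blast
      then obtain i where "{u, v} = {walk i, walk (Suc i)}"
        using nb_walk_edge_cases uv by blast
      then show ?thesis
        by (auto simp: doubleton_eq_iff)
    qed
  qed
qed

lemma edges_eq_nb_walk_edges:
  assumes "connected_graph V E"
  shows "E = (\<lambda>i. {walk i, walk (Suc i mod j)}) ` {0..<j}"
proof
  show "E \<subseteq> (\<lambda>i. {walk i, walk (Suc i mod j)}) ` {0..<j}"
  proof
    fix e assume "e \<in> E"
    then obtain x y where "e = {x, y}" "x \<in> V"
      using simple unfolding simple_graph_def by (metis card_2_iff insert_subset)
    then obtain i where "e = {walk i, walk (Suc i)}"
      using nb_walk_edge_cases \<open>e \<in> E\<close> range_nb_walk_eq_vertices[OF assms] by blast
    then show "e \<in> (\<lambda>i. {walk i, walk (Suc i mod j)}) ` {0..<j}"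
      using nb_walk_mod[of i] nb_walk_mod[of "Suc i"] period_pos
      by (intro image_eqI[of _ _ "i mod j"]) (auto simp: mod_Suc_eq)
  qed
  have "{walk i, walk (Suc i mod j)} \<in> E" for i
    using nb_walk_edge[of i] nb_walk_mod[of "Suc i"] by simp
  then show "(\<lambda>i. {walk i, walk (Suc i mod j)}) ` {0..<j} \<subseteq> E"
    by blast
qed

end

lemma two_regular_iso_cycle:
  assumes "connected_graph V E"
  shows "iso_cycle V E (card V)"
proof -
  obtain j where j: "j \<ge> 3" "inj_on walk {0..<j}" "walk j = a"
    by (rule nb_walk_first_return)
  have "0 < j"
    using j(1) by simp
  note period = this nb_walk_period[OF j]
  have bij: "bij_betw walk {0..<j} V"
    using range_nb_walk_eq_vertices[OF period assms] range_nb_walk[OF period] j(2)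
    unfolding bij_betw_def by simp
  then have "card V = j"
    by (simp add: bij_betw_same_card[symmetric])
  then show ?thesis
    using iso_cycleI[OF bij edges_eq_nb_walk_edges[OF period assms]] by simp
qed

end

section \<open>Degree sequences of average 2\<close>

lemma sum_eq_card_mult_above_below:
  fixes f :: "'a \<Rightarrow> nat"
  assumes "finite A" "(\<Sum>x\<in>A. f x) = card A * c" "x \<in> A" "f x \<noteq> c"
  shows "(\<exists>y\<in>A. c < f y) \<and> (\<exists>z\<in>A. f z < c)"
proof (intro conjI; rule ccontr)
  assume "\<not> (\<exists>y\<in>A. c < f y)"
  then have "\<forall>y\<in>A. f y \<le> c" "\<exists>y\<in>A. f y < c"
    using assms(3,4) by (auto simp: not_less order.order_iff_strict)
  then have "(\<Sum>x\<in>A. f x) < (\<Sum>x\<in>A. c)"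
    by (rule sum_strict_mono_ex1[OF assms(1)])
  then show False
    using assms(2) by simp
next
  assume "\<not> (\<exists>z\<in>A. f z < c)"
  then have "\<forall>y\<in>A. c \<le> f y" "\<exists>y\<in>A. c < f y"
    using assms(3,4) by (auto simp: not_less order.order_iff_strict)
  then have "(\<Sum>x\<in>A. c) < (\<Sum>x\<in>A. f x)"
    by (rule sum_strict_mono_ex1[OF assms(1)])
  then show False
    using assms(2) by simp
qed

lemma sum_eq_card_mult_const:
  fixes f :: "'a \<Rightarrow> nat"
  assumes "finite A" "(\<Sum>x\<in>A. f x) = card A * c" "\<forall>x\<in>A. \<forall>y\<in>A. f x = f y" "x \<in> A"
  shows "f x = c"
proof (rule ccontr)
  assume "f x \<noteq> c"
  then obtain y z where "y \<in> A" "z \<in> A" "f z < c" "c < f y"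
    using sum_eq_card_mult_above_below[OF assms(1,2,4)] by blast
  then show False
    using assms(3) by fastforce
qed

definition abs_diff_sum :: "'a set \<Rightarrow> ('a \<Rightarrow> nat) \<Rightarrow> real" where
  "abs_diff_sum A d = (\<Sum>x\<in>A. \<Sum>y\<in>A. \<bar>real (d x) - real (d y)\<bar>)"

lemma abs_diff_sum_nonneg: "abs_diff_sum A d \<ge> 0"
  unfolding abs_diff_sum_def by (intro sum_nonneg) auto

lemma abs_diff_sum_eq_0_iff:
  assumes "finite A"
  shows "abs_diff_sum A d = 0 \<longleftrightarrow> (\<forall>x\<in>A. \<forall>y\<in>A. d x = d y)"
proof -
  have "abs_diff_sum A d = 0 \<longleftrightarrow> (\<forall>x\<in>A. (\<Sum>y\<in>A. \<bar>real (d x) - real (d y)\<bar>) = 0)"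
    unfolding abs_diff_sum_def using assms by (intro sum_nonneg_eq_0_iff) (auto intro: sum_nonneg)
  also have "\<dots> \<longleftrightarrow> (\<forall>x\<in>A. \<forall>y\<in>A. \<bar>real (d x) - real (d y)\<bar> = 0)"
    using assms by (simp add: sum_nonneg_eq_0_iff)
  finally show ?thesis
    by simp
qed

lemma abs_diff_sum_insert:
  assumes "finite A" "a \<notin> A"
  shows "abs_diff_sum (insert a A) d =
           abs_diff_sum A d + 2 * (\<Sum>y\<in>A. \<bar>real (d a) - real (d y)\<bar>)"
proof -
  have "abs_diff_sum (insert a A) d =
          (\<Sum>y\<in>A. \<bar>real (d a) - real (d y)\<bar>)
          + (\<Sum>x\<in>A. \<bar>real (d x) - real (d a)\<bar> + (\<Sum>y\<in>A. \<bar>real (d x) - real (d y)\<bar>))"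
    unfolding abs_diff_sum_def using assms by (simp add: sum.insert)
  also have "\<dots> = abs_diff_sum A d + 2 * (\<Sum>y\<in>A. \<bar>real (d a) - real (d y)\<bar>)"
    unfolding abs_diff_sum_def sum.distrib by (simp add: abs_minus_commute)
  finally show ?thesis .
qed

lemma abs_diff_sum_remove_two:
  assumes "finite V" "a \<in> V" "b \<in> V" "a \<noteq> b"
  shows "abs_diff_sum V d = abs_diff_sum (V - {a, b}) d + 2 * \<bar>real (d a) - real (d b)\<bar>
           + 2 * (\<Sum>y\<in>V - {a, b}. \<bar>real (d a) - real (d y)\<bar> + \<bar>real (d b) - real (d y)\<bar>)"
proof -
  define W where "W = V - {a, b}"
  have V: "V = insert a (insert b W)" and W: "a \<notin> insert b W" "b \<notin> W" "finite W"
    using assms unfolding W_def by auto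
  have "abs_diff_sum V d = abs_diff_sum W d + 2 * (\<Sum>y\<in>W. \<bar>real (d b) - real (d y)\<bar>)
          + 2 * (\<bar>real (d a) - real (d b)\<bar> + (\<Sum>y\<in>W. \<bar>real (d a) - real (d y)\<bar>))"
    unfolding V using W by (simp add: abs_diff_sum_insert)
  then show ?thesis
    unfolding W_def[symmetric] by (simp add: sum.distrib algebra_simps)
qed

lemma abs_diff_sum_ge_extremes:
  assumes "finite V" "a \<in> V" "b \<in> V" "a \<noteq> b" "d b \<le> d a"
  shows "abs_diff_sum V d \<ge>
           abs_diff_sum (V - {a, b}) d + 2 * ((real (card V) - 1) * (real (d a) - real (d b)))"
proof -
  define D where "D = real (d a) - real (d b)"
  have "2 \<le> card V"
    using card_mono[OF assms(1), of "{a, b}"] assms(2-4) by simp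
  then have card_W: "real (card (V - {a, b})) = real (card V) - 2"
    using assms(1-4) by (simp add: card_Diff_subset)
  have "\<bar>real (d a) - real (d y)\<bar> + \<bar>real (d b) - real (d y)\<bar> \<ge> D" for y
    unfolding D_def by linarith
  then have "(\<Sum>y\<in>V - {a, b}. \<bar>real (d a) - real (d y)\<bar> + \<bar>real (d b) - real (d y)\<bar>)
               \<ge> real (card (V - {a, b})) * D"
    using sum_mono[of "V - {a, b}" "\<lambda>_. D"] by fastforce
  moreover have "2 * D + 2 * (real (card (V - {a, b})) * D) = 2 * ((real (card V) - 1) * D)"
    unfolding card_W by (simp add: algebra_simps)
  ultimately show ?thesis
    using abs_diff_sum_remove_two[OF assms(1-4), of d] assms(5) unfolding D_def by simp
qed

lemma abs_diff_sum_average_2: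
  fixes d :: "'a \<Rightarrow> nat"
  assumes "finite V" "(\<Sum>v\<in>V. d v) = card V * 2"
    and "a \<in> V" "b \<in> V" "d a \<ge> 3" "d b = 1"
  shows "abs_diff_sum V d \<ge> 4 * real (card V) - 4"
    and "abs_diff_sum V d = 4 * real (card V) - 4 \<longleftrightarrow> d a = 3 \<and> (\<forall>w\<in>V - {a, b}. d w = 2)"
proof -
  define W where "W = V - {a, b}"
  have "a \<noteq> b"
    using assms(5,6) by auto
  then have "2 \<le> card V"
    using card_mono[OF assms(1), of "{a, b}"] assms(3,4) by simp
  have "finite W" "card W = card V - 2"
    using assms(1,3,4) \<open>a \<noteq> b\<close> unfolding W_def by (simp_all add: card_Diff_subset)
  have lower: "abs_diff_sum V d \<ge> abs_diff_sum W d + 2 * ((real (card V) - 1) * (real (d a) - 1))"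
    using abs_diff_sum_ge_extremes[OF assms(1,3,4) \<open>a \<noteq> b\<close>, of d] assms(5,6) unfolding W_def by simp
  have "(real (card V) - 1) * (real (d a) - 1) \<ge> (real (card V) - 1) * 2"
    using assms(5) \<open>2 \<le> card V\<close> by (intro mult_left_mono) auto
  then show "abs_diff_sum V d \<ge> 4 * real (card V) - 4"
    using lower abs_diff_sum_nonneg[of W d] by (simp add: algebra_simps)
  show "abs_diff_sum V d = 4 * real (card V) - 4 \<longleftrightarrow> d a = 3 \<and> (\<forall>w\<in>V - {a, b}. d w = 2)"
    unfolding W_def[symmetric]
  proof
    assume eq: "abs_diff_sum V d = 4 * real (card V) - 4"
    then have "(real (card V) - 1) * (real (d a) - 1) \<le> (real (card V) - 1) * 2"
      using lower abs_diff_sum_nonneg[of W d] by (simp add: algebra_simps)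
    moreover have "real (card V) - 1 > 0"
      using \<open>2 \<le> card V\<close> by simp
    ultimately have "real (d a) - 1 \<le> 2"
      by (rule mult_left_le_imp_le)
    then have "d a = 3"
      using assms(5) by linarith
    then have "abs_diff_sum W d = 0"
      using eq lower abs_diff_sum_nonneg[of W d] by (simp add: algebra_simps)
    moreover have "(\<Sum>w\<in>W. d w) = card W * 2"
    proof -
      have "(\<Sum>v\<in>V. d v) = d a + (\<Sum>v\<in>V - {a}. d v)"
        by (rule sum.remove[OF assms(1,3)])
      also have "(\<Sum>v\<in>V - {a}. d v) = d b + (\<Sum>w\<in>W. d w)"
        using sum.remove[of "V - {a}" b d] assms(1,4) \<open>a \<noteq> b\<close> unfolding W_def
        by (simp add: Diff_insert2[symmetric])
      finally show ?thesis
        using assms(2,6) \<open>d a = 3\<close> \<open>card W = card V - 2\<close> by simp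
    qed
    ultimately show "d a = 3 \<and> (\<forall>w\<in>W. d w = 2)"
      using \<open>d a = 3\<close> sum_eq_card_mult_const[OF \<open>finite W\<close>] abs_diff_sum_eq_0_iff[OF \<open>finite W\<close>]
      by blast
  next
    assume extremes: "d a = 3 \<and> (\<forall>w\<in>W. d w = 2)"
    then have "abs_diff_sum W d = 0"
      using abs_diff_sum_eq_0_iff[OF \<open>finite W\<close>] by simp
    moreover have "(\<Sum>y\<in>W. \<bar>real (d a) - real (d y)\<bar> + \<bar>real (d b) - real (d y)\<bar>) = (\<Sum>y\<in>W. 2)"
      using extremes assms(6) by (intro sum.cong) auto
    ultimately show "abs_diff_sum V d = 4 * real (card V) - 4"
      using abs_diff_sum_remove_two[OF assms(1,3,4) \<open>a \<noteq> b\<close>, of d] extremes assms(6)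
        \<open>card W = card V - 2\<close> \<open>2 \<le> card V\<close>
      unfolding W_def[symmetric] by (simp add: of_nat_diff)
  qed
qed

lemma degree_counts_iff:
  fixes d :: "'a \<Rightarrow> nat"
  assumes "finite V" "a \<in> V" "b \<in> V" "d a \<ge> 3" "d b = 1"
  shows "card {w \<in> V. d w = 3} = 1 \<and> card {w \<in> V. d w = 2} = card V - 2 \<and> card {w \<in> V. d w = 1} = 1
           \<longleftrightarrow> d a = 3 \<and> (\<forall>w\<in>V - {a, b}. d w = 2)"
proof
  assume counts: "card {w \<in> V. d w = 3} = 1 \<and> card {w \<in> V. d w = 2} = card V - 2 \<and>
    card {w \<in> V. d w = 1} = 1"
  have "a \<noteq> b"
    using assms(4,5) by auto
  then have "2 \<le> card V"
    using card_mono[OF assms(1), of "{a, b}"] assms(2,3) by simp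
  let ?U = "{w \<in> V. d w = 3} \<union> {w \<in> V. d w = 2} \<union> {w \<in> V. d w = 1}"
  have "card ?U = card {w \<in> V. d w = 3} + card {w \<in> V. d w = 2} + card {w \<in> V. d w = 1}"
    using assms(1) by (subst card_Un_disjoint; auto simp: card_Un_disjoint)+
  then have "card ?U = card V"
    using counts \<open>2 \<le> card V\<close> by simp
  then have U: "?U = V"
    using assms(1) by (intro card_subset_eq) auto
  then have "d a = 3"
    using assms(2,4) by auto
  moreover have "{w \<in> V. d w = 3} = {a}" "{w \<in> V. d w = 1} = {b}"
    using counts assms(2,3,5) \<open>d a = 3\<close> by (metis (mono_tags, lifting) card_1_singletonE mem_Collect_eq singletonD)+
  ultimately show "d a = 3 \<and> (\<forall>w\<in>V - {a, b}. d w = 2)"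
    using U by blast
next
  assume "d a = 3 \<and> (\<forall>w\<in>V - {a, b}. d w = 2)"
  then have "{w \<in> V. d w = 3} = {a}" "{w \<in> V. d w = 2} = V - {a, b}" "{w \<in> V. d w = 1} = {b}"
    using assms(2,3,5) by force+
  moreover have "a \<noteq> b"
    using assms(4,5) by auto
  ultimately show "card {w \<in> V. d w = 3} = 1 \<and> card {w \<in> V. d w = 2} = card V - 2 \<and>
    card {w \<in> V. d w = 1} = 1"
    using assms(1,2,3) by (simp add: card_Diff_subset)
qed

section \<open>Unicyclic graphs\<close>

lemma unicyclic_sum_degree:
  "unicyclic V E \<Longrightarrow> (\<Sum>v\<in>V. degree E v) = card V * 2"
  unfolding unicyclic_def using sum_degree_eq_twice_card_edges by (metis mult.commute)

lemma unicyclic_iso_cycle_iff_two_regular: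
  assumes "unicyclic V E"
  shows "iso_cycle V E (card V) \<longleftrightarrow> (\<forall>v\<in>V. degree E v = 2)"
proof
  have simple: "simple_graph V E" and finite: "finite V"
    using assms unfolding unicyclic_def simple_graph_def by auto
  assume iso: "iso_cycle V E (card V)"
  have le_2: "degree E v \<le> 2" if "v \<in> V" for v
    by (rule iso_cycle_degree_le_2[OF iso simple that])
  show "\<forall>v\<in>V. degree E v = 2"
  proof (rule ccontr)
    assume "\<not> (\<forall>v\<in>V. degree E v = 2)"
    then obtain v where "v \<in> V" "degree E v \<noteq> 2"
      by blast
    then obtain y where "y \<in> V" "2 < degree E y"
      using sum_eq_card_mult_above_below[OF finite unicyclic_sum_degree[OF assms]] by blast
    then show False
      using le_2[of y] by simp
  qed
next
  assume two_regular: "\<forall>v\<in>V. degree E v = 2"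
  have simple: "simple_graph V E" and connected: "connected_graph V E"
    using assms unfolding unicyclic_def by auto
  then obtain a where "a \<in> V"
    unfolding connected_graph_def by blast
  obtain p q where "neighbours E a = {p, q}"
    by (rule degree_2_neighbours[OF simple]) (use two_regular \<open>a \<in> V\<close> in blast)
  then have "{a, p} \<in> E"
    unfolding neighbours_def by blast
  then show "iso_cycle V E (card V)"
    by (rule two_regular_iso_cycle[OF simple two_regular _ connected])
qed

lemma irr_t_eq_abs_diff_sum: "irr_t V E = abs_diff_sum V (degree E) / 2"
  unfolding irr_t_def abs_diff_sum_def by simp

lemma unicyclic_irr_t_eq_0_iff:
  assumes "unicyclic V E"
  shows "irr_t V E = 0 \<longleftrightarrow> (\<forall>v\<in>V. degree E v = 2)"
proof -
  have finite: "finite V"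
    using assms unfolding unicyclic_def simple_graph_def by auto
  have "(\<forall>x\<in>V. \<forall>y\<in>V. degree E x = degree E y) \<longleftrightarrow> (\<forall>v\<in>V. degree E v = 2)"
  proof
    assume "\<forall>x\<in>V. \<forall>y\<in>V. degree E x = degree E y"
    then show "\<forall>v\<in>V. degree E v = 2"
      using sum_eq_card_mult_const[OF finite unicyclic_sum_degree[OF assms]] by blast
  qed simp
  then show ?thesis
    unfolding irr_t_eq_abs_diff_sum by (simp add: abs_diff_sum_eq_0_iff[OF finite])
qed

lemma unicyclic_irr_t_not_two_regular:
  assumes "unicyclic V E" "card V \<ge> 2" "\<not> (\<forall>v\<in>V. degree E v = 2)"
  shows "irr_t V E \<ge> 2 * real (card V) - 2"
    and "irr_t V E = 2 * real (card V) - 2 \<longleftrightarrow>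
           card {w \<in> V. degree E w = 3} = 1 \<and> card {w \<in> V. degree E w = 2} = card V - 2 \<and>
           card {w \<in> V. degree E w = 1} = 1"
proof -
  have simple: "simple_graph V E" and connected: "connected_graph V E" and finite: "finite V"
    using assms(1) unfolding unicyclic_def simple_graph_def by auto
  note degree_sum = unicyclic_sum_degree[OF assms(1)]
  obtain a b where "a \<in> V" "b \<in> V" "2 < degree E a" "degree E b < 2"
    using sum_eq_card_mult_above_below[OF finite degree_sum] assms(3) by blast
  moreover have "degree E b \<ge> 1"
    using connected_graph_degree_ge_1[OF simple connected assms(2) \<open>b \<in> V\<close>] .
  ultimately have extremes: "a \<in> V" "b \<in> V" "3 \<le> degree E a" "degree E b = 1"
    by auto
  note bound = abs_diff_sum_average_2[OF finite degree_sum extremes]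
  show "irr_t V E \<ge> 2 * real (card V) - 2"
    using bound(1) unfolding irr_t_eq_abs_diff_sum by simp
  show "irr_t V E = 2 * real (card V) - 2 \<longleftrightarrow>
           card {w \<in> V. degree E w = 3} = 1 \<and> card {w \<in> V. degree E w = 2} = card V - 2 \<and>
           card {w \<in> V. degree E w = 1} = 1"
    unfolding degree_counts_iff[OF finite extremes] bound(2)[symmetric] irr_t_eq_abs_diff_sum
    by auto
qed

theorem theorem9:
  fixes V :: "'a set" and E :: "'a set set" and n :: nat
  assumes "n \<ge> 3" and "card V = n" and "unicyclic V E"
  shows "(irr_t V E \<ge> 0 \<and> (irr_t V E = 0 \<longleftrightarrow> iso_cycle V E n)) \<and>
         (n \<ge> 4 \<and> \<not> iso_cycle V E n \<longrightarrow>
           irr_t V E \<ge> 2 * real n - 2 \<and>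
           (irr_t V E = 2 * real n - 2 \<longleftrightarrow>
              card {w \<in> V. degree E w = 3} = 1 \<and>
              card {w \<in> V. degree E w = 2} = n - 2 \<and>
              card {w \<in> V. degree E w = 1} = 1))"
proof -
  have cycle_iff: "iso_cycle V E n \<longleftrightarrow> (\<forall>v\<in>V. degree E v = 2)"
    using unicyclic_iso_cycle_iff_two_regular[OF assms(3)] assms(2) by simp
  have "irr_t V E \<ge> 0"
    unfolding irr_t_eq_abs_diff_sum using abs_diff_sum_nonneg by simp
  moreover have "irr_t V E = 0 \<longleftrightarrow> iso_cycle V E n"
    using unicyclic_irr_t_eq_0_iff[OF assms(3)] cycle_iff by simp
  moreover have "irr_t V E \<ge> 2 * real n - 2 \<and>
           (irr_t V E = 2 * real n - 2 \<longleftrightarrow>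
              card {w \<in> V. degree E w = 3} = 1 \<and> card {w \<in> V. degree E w = 2} = n - 2 \<and>
              card {w \<in> V. degree E w = 1} = 1)"
    if "\<not> iso_cycle V E n"
    using unicyclic_irr_t_not_two_regular[OF assms(3)] that cycle_iff assms(1,2) by auto
  ultimately show ?thesis
    by blast
qed

end
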